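(* Let $A$ be a pc monoid whose seminormalization $A\to A_{\mathrm{sn}}$ exists, let $I$ be an ideal of $A$, and set $J=\sqrt{IA_{\mathrm{sn}}}$. Then the induced map $A/I\to A_{\mathrm{sn}}/J$ is the seminormalization of $A/I$.
   Context: A monoid is a pointed commutative monoid. An ideal is a subset $I\ni0$ with $AI\subseteq I$; $A/I$ collapses $I$ to $0$; $IB$ is the ideal of $B$ generated by the image of $I$; $\sqrt{K}=\{b: b^n\in K\text{ for some }n\ge1\}$. pc: isomorphic to $C/I$ with $C$ cancellative ($ac=bc,c\ne0\Rightarrow a=b$). Reduced: $a^2=b^2,a^3=b^3\Rightarrow a=b$; $A_{\mathrm{red}}$ is $A$ modulo $a\sim b$ iff $a^n=b^n$ for all $n\gg0$. Seminormal: reduced and $x^3=y^2\Rightarrow x=z^2,y=z^3$ for some $z$. A seminormalization of $A$ is a map $A\to B$ with $B$ seminormal, $A_{\mathrm{red}}\to B$ injective, and $b^n\in A_{\mathrm{red}}$ for all $n\gg0$ for every $b\in B$. *)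

theory Defs
  imports Main
begin

record 'a pcm =
  mcarr :: "'a set"
  mmul  :: "'a \<Rightarrow> 'a \<Rightarrow> 'a"
  munit :: "'a"
  mzero :: "'a"

definition pcmon :: "'a pcm \<Rightarrow> bool" where
  "pcmon M \<longleftrightarrow>
     munit M \<in> mcarr M \<and> mzero M \<in> mcarr M \<and>
     (\<forall>a\<in>mcarr M. \<forall>b\<in>mcarr M. mmul M a b \<in> mcarr M) \<and>
     (\<forall>a\<in>mcarr M. \<forall>b\<in>mcarr M. \<forall>c\<in>mcarr M. mmul M (mmul M a b) c = mmul M a (mmul M b c)) \<and>
     (\<forall>a\<in>mcarr M. \<forall>b\<in>mcarr M. mmul M a b = mmul M b a) \<and>
     (\<forall>a\<in>mcarr M. mmul M (munit M) a = a) \<and>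
     (\<forall>a\<in>mcarr M. mmul M (mzero M) a = mzero M)"

primrec mpow :: "'a pcm \<Rightarrow> 'a \<Rightarrow> nat \<Rightarrow> 'a" where
  "mpow M a 0 = munit M"
| "mpow M a (Suc n) = mmul M a (mpow M a n)"

definition mon_hom :: "'a pcm \<Rightarrow> 'b pcm \<Rightarrow> ('a \<Rightarrow> 'b) \<Rightarrow> bool" where
  "mon_hom A B f \<longleftrightarrow>
     (\<forall>a\<in>mcarr A. f a \<in> mcarr B) \<and> f (munit A) = munit B \<and> f (mzero A) = mzero B \<and>
     (\<forall>a\<in>mcarr A. \<forall>b\<in>mcarr A. f (mmul A a b) = mmul B (f a) (f b))"

definition mon_iso :: "'a pcm \<Rightarrow> 'b pcm \<Rightarrow> ('a \<Rightarrow> 'b) \<Rightarrow> bool" where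
  "mon_iso A B f \<longleftrightarrow> mon_hom A B f \<and> bij_betw f (mcarr A) (mcarr B)"

definition mideal :: "'a pcm \<Rightarrow> 'a set \<Rightarrow> bool" where
  "mideal A I \<longleftrightarrow> I \<subseteq> mcarr A \<and> mzero A \<in> I \<and>
     (\<forall>a\<in>mcarr A. \<forall>i\<in>I. mmul A a i \<in> I)"

definition quot :: "'a pcm \<Rightarrow> 'a set \<Rightarrow> 'a pcm" where
  "quot A I = \<lparr> mcarr = (mcarr A - I) \<union> {mzero A},
               mmul = (\<lambda>x y. if mmul A x y \<in> I then mzero A else mmul A x y),
               munit = (if munit A \<in> I then mzero A else munit A),
               mzero = mzero A \<rparr>"

definition induced :: "'b pcm \<Rightarrow> 'b set \<Rightarrow> ('a \<Rightarrow> 'b) \<Rightarrow> 'a \<Rightarrow> 'b" where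
  "induced B J f x = (if f x \<in> J then mzero B else f x)"

definition ext_ideal :: "'b pcm \<Rightarrow> ('a \<Rightarrow> 'b) \<Rightarrow> 'a set \<Rightarrow> 'b set" where
  "ext_ideal B f I = \<Inter> {K. mideal B K \<and> f ` I \<subseteq> K}"

definition mrad :: "'a pcm \<Rightarrow> 'a set \<Rightarrow> 'a set" where
  "mrad B K = {b \<in> mcarr B. \<exists>n\<ge>1. mpow B b n \<in> K}"

definition cancellative :: "'a pcm \<Rightarrow> bool" where
  "cancellative C \<longleftrightarrow> (\<forall>a\<in>mcarr C. \<forall>b\<in>mcarr C. \<forall>c\<in>mcarr C.
      mmul C a c = mmul C b c \<and> c \<noteq> mzero C \<longrightarrow> a = b)"

text \<open>The type of C is passed as a parameter;
  an assumption pc TYPE('c) A with 'c free in a theorem amounts to existence of such a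
  presentation with C of some type.\<close>
definition pc :: "'c itself \<Rightarrow> 'a pcm \<Rightarrow> bool" where
  "pc T A \<longleftrightarrow> pcmon A \<and> (\<exists>(C::'c pcm) K h. pcmon C \<and> cancellative C \<and> mideal C K \<and>
       mon_iso (quot C K) A h)"

definition reduced :: "'a pcm \<Rightarrow> bool" where
  "reduced M \<longleftrightarrow> (\<forall>a\<in>mcarr M. \<forall>b\<in>mcarr M.
      mpow M a 2 = mpow M b 2 \<and> mpow M a 3 = mpow M b 3 \<longrightarrow> a = b)"

definition seminormal :: "'a pcm \<Rightarrow> bool" where
  "seminormal M \<longleftrightarrow> pcmon M \<and> reduced M \<and>
     (\<forall>x\<in>mcarr M. \<forall>y\<in>mcarr M. mpow M x 3 = mpow M y 2 \<longrightarrow>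
        (\<exists>z\<in>mcarr M. x = mpow M z 2 \<and> y = mpow M z 3))"

text \<open>f : A \<rightarrow> B is a seminormalization of A: B seminormal, the induced map
  A_red \<rightarrow> B is (well defined and) injective, i.e. f a = f b iff a^n = b^n for n \<gg> 0,
  and every b has b^n in the image of A_red (= image of A) for n \<gg> 0.\<close>
definition is_seminormalization :: "'a pcm \<Rightarrow> 'b pcm \<Rightarrow> ('a \<Rightarrow> 'b) \<Rightarrow> bool" where
  "is_seminormalization A B f \<longleftrightarrow> pcmon A \<and> mon_hom A B f \<and> seminormal B \<and>
     (\<forall>a\<in>mcarr A. \<forall>b\<in>mcarr A. f a = f b \<longleftrightarrow> (\<exists>N. \<forall>n\<ge>N. mpow A a n = mpow A b n)) \<and>
     (\<forall>b\<in>mcarr B. \<exists>N. \<forall>n\<ge>N. mpow B b n \<in> f ` mcarr A)"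

end

theory Submission
  imports Defs
begin

text \<open>The point is that \<open>J\<close> contracts to the
  radical of \<open>I\<close>: if \<open>f(a)\<^sup>n = c f(i)\<close> with \<open>i \<in> I\<close>, some power \<open>c\<^sup>m = f(a')\<close> comes from \<open>A\<close>,
  so \<open>f(a\<^sup>n\<^sup>m) = f(a' i\<^sup>m)\<close>; hence \<open>a\<^sup>n\<^sup>m\<close> and the element \<open>a' i\<^sup>m\<close> of \<open>I\<close> have equal powers
  eventually, and \<open>a\<close> lies in \<open>\<surd>I\<close>. Everything else descends to the quotients because \<open>J\<close> is
  radical: powers of an element outside \<open>J\<close> never collapse to \<open>0\<close> in \<open>A\<^sub>s\<^sub>n/J\<close>, while the
  powers of an element of \<open>A/I\<close> eventually vanish exactly when it lies in \<open>\<surd>I\<close>, i.e. when the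
  induced map sends it to \<open>0\<close>.\<close>

lemma pcmonD:
  assumes "pcmon M"
  shows "munit M \<in> mcarr M" "mzero M \<in> mcarr M"
    "\<And>a b. a \<in> mcarr M \<Longrightarrow> b \<in> mcarr M \<Longrightarrow> mmul M a b \<in> mcarr M"
    "\<And>a b c. a \<in> mcarr M \<Longrightarrow> b \<in> mcarr M \<Longrightarrow> c \<in> mcarr M \<Longrightarrow>
      mmul M (mmul M a b) c = mmul M a (mmul M b c)"
    "\<And>a b. a \<in> mcarr M \<Longrightarrow> b \<in> mcarr M \<Longrightarrow> mmul M a b = mmul M b a"
    "\<And>a. a \<in> mcarr M \<Longrightarrow> mmul M (munit M) a = a"
    "\<And>a. a \<in> mcarr M \<Longrightarrow> mmul M (mzero M) a = mzero M"
  using assms unfolding pcmon_def by auto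

lemma pcmon_mmul_unit_right: "pcmon M \<Longrightarrow> a \<in> mcarr M \<Longrightarrow> mmul M a (munit M) = a"
  by (metis pcmonD(1,5,6))

lemma pcmon_mmul_zero_right: "pcmon M \<Longrightarrow> a \<in> mcarr M \<Longrightarrow> mmul M a (mzero M) = mzero M"
  by (metis pcmonD(2,5,7))

lemma pcmon_mmul_swap:
  assumes "pcmon M" "x \<in> mcarr M" "y \<in> mcarr M" "z \<in> mcarr M" "w \<in> mcarr M"
  shows "mmul M (mmul M x y) (mmul M z w) = mmul M (mmul M x z) (mmul M y w)"
proof -
  note D = pcmonD[OF assms(1)]
  have "mmul M (mmul M x y) (mmul M z w) = mmul M x (mmul M (mmul M y z) w)"
    using assms by (simp add: D(1-4,6,7))
  also have "\<dots> = mmul M x (mmul M (mmul M z y) w)" using assms D(5)[of y z] by simp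
  also have "\<dots> = mmul M (mmul M x z) (mmul M y w)" using assms by (simp add: D(1-4,6,7))
  finally show ?thesis .
qed

lemma mpow_closed: "pcmon M \<Longrightarrow> a \<in> mcarr M \<Longrightarrow> mpow M a n \<in> mcarr M"
  by (induct n) (auto simp: pcmonD)

lemma mpow_one: "pcmon M \<Longrightarrow> a \<in> mcarr M \<Longrightarrow> mpow M a 1 = a"
  by (simp add: pcmon_mmul_unit_right)

lemma mpow_add:
  assumes "pcmon M" "a \<in> mcarr M"
  shows "mpow M a (m + n) = mmul M (mpow M a m) (mpow M a n)"
  by (induct m) (simp_all add: pcmonD(1-4,6,7)[OF assms(1)] mpow_closed[OF assms] assms)

lemma mpow_mult:
  assumes "pcmon M" "a \<in> mcarr M"
  shows "mpow M a (m * n) = mpow M (mpow M a m) n"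
  by (induct n) (simp_all add: mpow_add[OF assms])

lemma mpow_mmul:
  assumes "pcmon M" "a \<in> mcarr M" "b \<in> mcarr M"
  shows "mpow M (mmul M a b) n = mmul M (mpow M a n) (mpow M b n)"
  by (induct n) (simp_all add: pcmonD(1-4,6,7)[OF assms(1)] pcmon_mmul_swap mpow_closed assms)

lemma mon_hom_mpow:
  "mon_hom A B f \<Longrightarrow> pcmon A \<Longrightarrow> a \<in> mcarr A \<Longrightarrow> f (mpow A a n) = mpow B (f a) n"
  by (induct n) (auto simp: mon_hom_def mpow_closed)

lemma mideal_subset: "mideal M I \<Longrightarrow> x \<in> I \<Longrightarrow> x \<in> mcarr M"
  unfolding mideal_def by blast

lemma mideal_mzero: "mideal M I \<Longrightarrow> mzero M \<in> I"
  unfolding mideal_def by blast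

lemma mideal_mmul_left: "mideal M I \<Longrightarrow> i \<in> I \<Longrightarrow> a \<in> mcarr M \<Longrightarrow> mmul M a i \<in> I"
  unfolding mideal_def by blast

lemma mideal_mmul_right:
  "mideal M I \<Longrightarrow> pcmon M \<Longrightarrow> i \<in> I \<Longrightarrow> a \<in> mcarr M \<Longrightarrow> mmul M i a \<in> I"
  unfolding mideal_def by (metis pcmonD(5) subsetD)

lemma mideal_munit: "mideal M I \<Longrightarrow> pcmon M \<Longrightarrow> munit M \<in> I \<Longrightarrow> a \<in> mcarr M \<Longrightarrow> a \<in> I"
  by (metis mideal_mmul_left pcmon_mmul_unit_right)

lemma mideal_mpow: "mideal M I \<Longrightarrow> pcmon M \<Longrightarrow> i \<in> I \<Longrightarrow> n \<ge> 1 \<Longrightarrow> mpow M i n \<in> I"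
  by (cases n) (auto intro: mideal_mmul_right mpow_closed mideal_subset)

lemma mideal_mpow_mono:
  assumes "mideal M I" "pcmon M" "a \<in> mcarr M" "mpow M a n \<in> I" "n \<le> m"
  shows "mpow M a m \<in> I"
proof -
  have "mpow M a m = mmul M (mpow M a (m - n)) (mpow M a n)"
    using mpow_add[OF assms(2,3), of "m - n" n] assms(5) by simp
  then show ?thesis using mideal_mmul_left[OF assms(1,4)] mpow_closed[OF assms(2,3)] by simp
qed

subsection \<open>Quotients\<close>

lemma mcarr_quot: "x \<in> mcarr (quot M I) \<longleftrightarrow> x \<in> mcarr M \<and> x \<notin> I \<or> x = mzero M"
  by (auto simp: quot_def)

lemma pcmon_quot:
  assumes "pcmon M" "mideal M I"
  shows "pcmon (quot M I)"
proof -
  note D = pcmonD[OF assms(1)]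
  have assoc_in_I: "mmul M a (mmul M b c) \<in> I"
    if "a \<in> mcarr M" "b \<in> mcarr M" "c \<in> mcarr M" "mmul M a b \<in> I" for a b c
    using mideal_mmul_right[OF assms(2,1) that(4) that(3)] D(4) that by simp
  show ?thesis
    unfolding pcmon_def quot_def
    using D assoc_in_I mideal_mzero[OF assms(2)] mideal_mmul_left[OF assms(2)]
      mideal_mmul_right[OF assms(2,1)] pcmon_mmul_zero_right[OF assms(1)]
      mideal_munit[OF assms(2,1)] pcmon_mmul_unit_right[OF assms(1)]
    by auto
qed

lemma mpow_quot:
  assumes "pcmon M" "mideal M I" "a \<in> mcarr M" "n \<ge> 1"
  shows "mpow (quot M I) a n = (if mpow M a n \<in> I then mzero M else mpow M a n)"
  using assms(4)
proof (induct n)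
  case 0
  then show ?case by simp
next
  case (Suc n)
  have zero_in_I: "mzero M \<in> I" using mideal_mzero[OF assms(2)] .
  show ?case
  proof (cases "n = 0")
    case True
    then show ?thesis
      using zero_in_I assms mideal_munit[OF assms(2,1)] pcmon_mmul_zero_right[OF assms(1)]
        pcmon_mmul_unit_right[OF assms(1)]
      by (auto simp: quot_def)
  next
    case False
    then show ?thesis
      using Suc zero_in_I pcmon_mmul_zero_right[OF assms(1,3)]
        mideal_mmul_left[OF assms(2), of "mpow M a n" a] assms(3)
      by (auto simp: quot_def)
  qed
qed

subsection \<open>Radicals\<close>

lemma mrad_mpow:
  assumes "pcmon M" "a \<in> mcarr M" "n \<ge> 1" "mpow M a n \<in> mrad M K"
  shows "a \<in> mrad M K"
proof -
  obtain m where "m \<ge> 1" "mpow M (mpow M a n) m \<in> K" using assms(4) unfolding mrad_def by auto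
  then have "mpow M a (n * m) \<in> K" "n * m \<ge> 1"
    using mpow_mult[OF assms(1,2)] assms(3) by simp_all
  then show ?thesis using assms(2) unfolding mrad_def by blast
qed

lemma mrad_mrad:
  assumes "pcmon M"
  shows "mrad M (mrad M K) = mrad M K"
proof
  show "mrad M (mrad M K) \<subseteq> mrad M K"
    using mrad_mpow[OF assms] unfolding mrad_def[of M "mrad M K"] by blast
  show "mrad M K \<subseteq> mrad M (mrad M K)"
  proof
    fix x assume x: "x \<in> mrad M K"
    then have "x \<in> mcarr M" unfolding mrad_def by blast
    then show "x \<in> mrad M (mrad M K)"
      using x mpow_one[OF assms] unfolding mrad_def[of M "mrad M K"] by (intro CollectI conjI exI[of _ 1]) auto
  qed
qed

lemma subset_mrad:
  assumes "pcmon M" "mideal M K"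
  shows "K \<subseteq> mrad M K"
proof
  fix x assume x: "x \<in> K"
  then have "x \<in> mcarr M" using mideal_subset[OF assms(2)] by blast
  then show "x \<in> mrad M K"
    using x mpow_one[OF assms(1)] unfolding mrad_def by (intro CollectI conjI exI[of _ 1]) auto
qed

lemma mideal_mrad:
  assumes "pcmon M" "mideal M K"
  shows "mideal M (mrad M K)"
  unfolding mideal_def
proof (intro conjI ballI)
  show "mrad M K \<subseteq> mcarr M" unfolding mrad_def by blast
  show "mzero M \<in> mrad M K" using subset_mrad[OF assms] mideal_mzero[OF assms(2)] by blast
next
  fix a i assume a: "a \<in> mcarr M" and i: "i \<in> mrad M K"
  then obtain n where n: "n \<ge> 1" "mpow M i n \<in> K" "i \<in> mcarr M" unfolding mrad_def by auto
  have "mpow M (mmul M a i) n = mmul M (mpow M a n) (mpow M i n)"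
    using mpow_mmul[OF assms(1) a n(3)] .
  also have "\<dots> \<in> K" using mideal_mmul_left[OF assms(2) n(2) mpow_closed[OF assms(1) a]] .
  finally show "mmul M a i \<in> mrad M K"
    using n a pcmonD(3)[OF assms(1)] unfolding mrad_def by auto
qed

lemma mpow_quot_mrad:
  assumes "pcmon M" "mideal M J" "mrad M J = J" "x \<in> mcarr M" "n \<ge> 1"
  shows "mpow (quot M J) x n = (if x \<in> J then mzero M else mpow M x n)"
  using mpow_quot[OF assms(1,2,4,5)] mrad_mpow[OF assms(1,4,5), of J] assms(3)
    mideal_mpow[OF assms(2,1) _ assms(5)]
  by auto

lemma quot_mrad_mpow_eq_zero_iff:
  assumes "pcmon M" "mideal M J" "mrad M J = J" "x \<in> mcarr M" "n \<ge> 1"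
  shows "mpow (quot M J) x n = mzero M \<longleftrightarrow> x \<in> J"
proof -
  have "mpow M x n \<in> J \<Longrightarrow> x \<in> J"
    using mrad_mpow[OF assms(1,4,5), of J] unfolding assms(3) .
  then have "x \<notin> J \<Longrightarrow> mpow M x n \<noteq> mzero M" using mideal_mzero[OF assms(2)] by metis
  then show ?thesis unfolding mpow_quot_mrad[OF assms] by simp
qed

lemma seminormal_quot_mrad:
  assumes "seminormal M" "mideal M J" "mrad M J = J"
  shows "seminormal (quot M J)"
proof -
  have pM: "pcmon M" using assms(1) unfolding seminormal_def by blast
  note pow = mpow_quot_mrad[OF pM assms(2,3)]
  note zero_iff = quot_mrad_mpow_eq_zero_iff[OF pM assms(2,3)]
  have carr: "x \<in> mcarr M" "x \<in> J \<Longrightarrow> x = mzero M" if "x \<in> mcarr (quot M J)" for x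
    using that pcmonD(2)[OF pM] unfolding mcarr_quot by auto
  have "reduced (quot M J)"
    unfolding reduced_def
  proof (intro ballI impI)
    fix a b assume a: "a \<in> mcarr (quot M J)" and b: "b \<in> mcarr (quot M J)"
      and eq: "mpow (quot M J) a 2 = mpow (quot M J) b 2 \<and> mpow (quot M J) a 3 = mpow (quot M J) b 3"
    have "a \<in> J \<longleftrightarrow> b \<in> J" using zero_iff[OF carr(1)[OF a], of 2] zero_iff[OF carr(1)[OF b], of 2] eq
      by simp
    then show "a = b"
      using eq pow[OF carr(1)[OF a]] pow[OF carr(1)[OF b]] carr[OF a] carr[OF b] assms(1)
      unfolding seminormal_def reduced_def by (cases "a \<in> J") auto
  qed
  moreover have "\<exists>z\<in>mcarr (quot M J). x = mpow (quot M J) z 2 \<and> y = mpow (quot M J) z 3"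
    if x: "x \<in> mcarr (quot M J)" and y: "y \<in> mcarr (quot M J)"
      and eq: "mpow (quot M J) x 3 = mpow (quot M J) y 2" for x y
  proof (cases "x \<in> J")
    case True
    then have "y \<in> J" using zero_iff[OF carr(1)[OF x], of 3] zero_iff[OF carr(1)[OF y], of 2] eq
      by simp
    then show ?thesis
      using True carr[OF x] carr[OF y] pow[OF pcmonD(2)[OF pM]] mideal_mzero[OF assms(2)]
      by (intro bexI[of _ "mzero M"]) (auto simp: mcarr_quot)
  next
    case False
    then have "y \<notin> J" using zero_iff[OF carr(1)[OF x], of 3] zero_iff[OF carr(1)[OF y], of 2] eq
      by simp
    then have "mpow M x 3 = mpow M y 2" using False eq pow[OF carr(1)[OF x]] pow[OF carr(1)[OF y]]
      by simp
    then obtain z where z: "z \<in> mcarr M" "x = mpow M z 2" "y = mpow M z 3"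
      using assms(1) carr(1)[OF x] carr(1)[OF y] unfolding seminormal_def by blast
    have "z \<notin> J" using False z(2) mideal_mpow[OF assms(2) pM, of z 2] by auto
    then show ?thesis using z pow[OF z(1)] by (intro bexI[of _ z]) (auto simp: mcarr_quot)
  qed
  ultimately show ?thesis using pcmon_quot[OF pM assms(2)] unfolding seminormal_def by blast
qed

subsection \<open>Extended ideals\<close>

lemma ext_ideal_eq:
  assumes "mon_hom A B f" "pcmon B" "mideal A I"
  shows "ext_ideal B f I = {mmul B c (f i) | c i. c \<in> mcarr B \<and> i \<in> I}"
    (is "_ = ?S")
proof -
  note D = pcmonD[OF assms(2)]
  have f_I: "f i \<in> mcarr B" if "i \<in> I" for i
    using assms(1) mideal_subset[OF assms(3) that] unfolding mon_hom_def by blast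
  have "mideal B ?S"
    unfolding mideal_def
  proof (intro conjI ballI)
    show "?S \<subseteq> mcarr B" using D f_I by auto
    have "mzero B = mmul B (mzero B) (f (mzero A))"
      using assms(1) mideal_mzero[OF assms(3)] D(2,7) f_I unfolding mon_hom_def by simp
    then show "mzero B \<in> ?S" using D(2) mideal_mzero[OF assms(3)] by blast
    fix a x assume a: "a \<in> mcarr B" and "x \<in> ?S"
    then obtain c i where ci: "c \<in> mcarr B" "i \<in> I" "x = mmul B c (f i)" by auto
    then have "mmul B a x = mmul B (mmul B a c) (f i)" using a f_I D(4) by simp
    then show "mmul B a x \<in> ?S" using ci a D(3) by blast
  qed
  moreover have "f ` I \<subseteq> ?S"
  proof
    fix y assume "y \<in> f ` I"
    then obtain i where "i \<in> I" "y = f i" by blast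
    moreover have "f i = mmul B (munit B) (f i)" using D(6) f_I \<open>i \<in> I\<close> by simp
    ultimately show "y \<in> ?S" using D(1) by blast
  qed
  moreover have "?S \<subseteq> K" if K: "mideal B K" "f ` I \<subseteq> K" for K
  proof
    fix x assume "x \<in> ?S"
    then obtain c i where "c \<in> mcarr B" "i \<in> I" "x = mmul B c (f i)" by blast
    then show "x \<in> K" using mideal_mmul_left[OF K(1)] K(2) by blast
  qed
  ultimately show ?thesis
    unfolding ext_ideal_def by (intro equalityI Inter_lower Inter_greatest) blast+
qed

lemma mideal_ext_ideal:
  assumes "pcmon B" "f ` I \<subseteq> mcarr B"
  shows "mideal B (ext_ideal B f I)"
proof -
  have "mideal B (mcarr B)" using pcmonD[OF assms(1)] unfolding mideal_def by blast
  then show ?thesis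
    using assms(2) unfolding ext_ideal_def mideal_def by blast
qed

subsection \<open>Seminormalizations\<close>

lemma seminormalization_mpow_in_image:
  assumes "is_seminormalization A B f" "b \<in> mcarr B"
  obtains n a where "n \<ge> 1" "a \<in> mcarr A" "mpow B b n = f a"
proof -
  obtain N where "\<forall>n\<ge>N. mpow B b n \<in> f ` mcarr A"
    using assms unfolding is_seminormalization_def by blast
  then have "mpow B b (max N 1) \<in> f ` mcarr A" by simp
  then show ?thesis using that[of "max N 1"] by auto
qed

lemma seminormalization_eq_imp_mrad:
  assumes "is_seminormalization A B f" "mideal A I"
    "x \<in> mcarr A" "y \<in> I" "f x = f y"
  shows "x \<in> mrad A I"
proof -
  have pA: "pcmon A" using assms(1) unfolding is_seminormalization_def by blast
  obtain N where "\<forall>n\<ge>N. mpow A x n = mpow A y n"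
    using assms mideal_subset[OF assms(2,4)] unfolding is_seminormalization_def by blast
  then have "mpow A x (max N 1) \<in> I" using mideal_mpow[OF assms(2) pA assms(4)] by simp
  then show ?thesis using assms(3) unfolding mrad_def by (intro CollectI conjI exI) auto
qed

lemma seminormalization_mrad_ext_ideal:
  assumes sn: "is_seminormalization A B f" and I: "mideal A I" and a: "a \<in> mcarr A"
  shows "f a \<in> mrad B (ext_ideal B f I) \<longleftrightarrow> a \<in> mrad A I"
proof
  have pA: "pcmon A" and pB: "pcmon B" and hf: "mon_hom A B f"
    using sn unfolding is_seminormalization_def seminormal_def by blast+
  have f_carr: "\<And>x. x \<in> mcarr A \<Longrightarrow> f x \<in> mcarr B" using hf unfolding mon_hom_def by blast
  assume "f a \<in> mrad B (ext_ideal B f I)"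
  then obtain n c i where n: "n \<ge> 1" and c: "c \<in> mcarr B" and i: "i \<in> I"
    and fa: "mpow B (f a) n = mmul B c (f i)"
    unfolding mrad_def ext_ideal_eq[OF hf pB I] by blast
  have i_carr: "i \<in> mcarr A" using mideal_subset[OF I i] .
  obtain m a' where m: "m \<ge> 1" and a': "a' \<in> mcarr A" "mpow B c m = f a'"
    using seminormalization_mpow_in_image[OF sn c] by blast
  have "f (mpow A a (n * m)) = mpow B (mmul B c (f i)) m"
    using mon_hom_mpow[OF hf pA a] mpow_mult[OF pB f_carr[OF a]] fa by simp
  also have "\<dots> = f (mmul A a' (mpow A i m))"
    using mpow_mmul[OF pB c f_carr[OF i_carr]] a' mon_hom_mpow[OF hf pA i_carr]
      mpow_closed[OF pA i_carr] hf unfolding mon_hom_def by simp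
  finally have "mpow A a (n * m) \<in> mrad A I"
    using seminormalization_eq_imp_mrad[OF sn I mpow_closed[OF pA a]]
      mideal_mmul_left[OF I mideal_mpow[OF I pA i m] a'(1)] by blast
  moreover have "n * m \<ge> 1" using n m by simp
  ultimately show "a \<in> mrad A I" using mrad_mpow[OF pA a] by blast
next
  have pA: "pcmon A" and hf: "mon_hom A B f"
    using sn unfolding is_seminormalization_def by blast+
  assume "a \<in> mrad A I"
  then obtain n where n: "n \<ge> 1" "mpow A a n \<in> I" unfolding mrad_def by blast
  have "f ` I \<subseteq> ext_ideal B f I" unfolding ext_ideal_def by (intro Inter_greatest) simp
  then have "f (mpow A a n) \<in> ext_ideal B f I" using n(2) by blast
  then have "mpow B (f a) n \<in> ext_ideal B f I" unfolding mon_hom_mpow[OF hf pA a] .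
  moreover have "f a \<in> mcarr B" using hf a unfolding mon_hom_def by blast
  ultimately show "f a \<in> mrad B (ext_ideal B f I)" using n(1) unfolding mrad_def by blast
qed

subsection \<open>Passing a seminormalization to quotients\<close>

locale seminormalization_contraction =
  fixes A :: "'a pcm" and B :: "'b pcm" and f :: "'a \<Rightarrow> 'b" and I :: "'a set" and J :: "'b set"
  assumes seminormalization: "is_seminormalization A B f"
    and ideal_I: "mideal A I" and ideal_J: "mideal B J" and radical_J: "mrad B J = J"
    and contraction: "\<And>a. a \<in> mcarr A \<Longrightarrow> f a \<in> J \<longleftrightarrow> a \<in> mrad A I"
begin

lemma pcmon_A: "pcmon A" and pcmon_B: "pcmon B" and hom_f: "mon_hom A B f"
  using seminormalization unfolding is_seminormalization_def seminormal_def by blast+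

lemma f_closed: "a \<in> mcarr A \<Longrightarrow> f a \<in> mcarr B"
  using hom_f unfolding mon_hom_def by blast

lemma mcarr_quot_I: "a \<in> mcarr (quot A I) \<Longrightarrow> a \<in> mcarr A"
  using pcmonD(2)[OF pcmon_A] unfolding mcarr_quot by blast

lemma induced_eq: "induced B J f a = (if a \<in> mrad A I then mzero B else f a)" if "a \<in> mcarr A"
  using contraction[OF that] unfolding induced_def by simp

lemma mpow_quot_eq_zero_iff:
  assumes "a \<in> mcarr A" "n \<ge> 1"
  shows "mpow (quot A I) a n = mzero A \<longleftrightarrow> mpow A a n \<in> I"
  using mpow_quot[OF pcmon_A ideal_I assms] mideal_mzero[OF ideal_I] by auto

lemma eventually_mpow_quot_zero_iff:
  assumes "a \<in> mcarr A"
  shows "(\<forall>\<^sub>F n in sequentially. mpow (quot A I) a n = mzero A) \<longleftrightarrow> a \<in> mrad A I"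
proof
  assume "\<forall>\<^sub>F n in sequentially. mpow (quot A I) a n = mzero A"
  then obtain N where "\<forall>n\<ge>N. mpow (quot A I) a n = mzero A"
    unfolding eventually_sequentially by blast
  then have "mpow A a (max N 1) \<in> I" using mpow_quot_eq_zero_iff[OF assms, of "max N 1"] by simp
  then show "a \<in> mrad A I" using assms unfolding mrad_def by (intro CollectI conjI exI) auto
next
  assume "a \<in> mrad A I"
  then obtain m where "m \<ge> 1" "mpow A a m \<in> I" unfolding mrad_def by blast
  then show "\<forall>\<^sub>F n in sequentially. mpow (quot A I) a n = mzero A"
    unfolding eventually_sequentially
    using mpow_quot_eq_zero_iff[OF assms] mideal_mpow_mono[OF ideal_I pcmon_A assms]
    by (intro exI[of _ m]) auto
qed

lemma eventually_mpow_quot_eq: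
  assumes "a \<in> mcarr A" "a \<notin> mrad A I"
  shows "\<forall>\<^sub>F n in sequentially. mpow (quot A I) a n = mpow A a n"
  unfolding eventually_sequentially
  using mpow_quot[OF pcmon_A ideal_I assms(1)] assms unfolding mrad_def by (intro exI[of _ 1]) auto

lemma mon_hom_induced: "mon_hom (quot A I) (quot B J) (induced B J f)"
  unfolding mon_hom_def
proof (intro conjI ballI)
  have f_simps: "f (munit A) = munit B" "f (mzero A) = mzero B"
    using hom_f unfolding mon_hom_def by auto
  have zero_J: "mzero B \<in> J" using mideal_mzero[OF ideal_J] .
  show "induced B J f a \<in> mcarr (quot B J)" if "a \<in> mcarr (quot A I)" for a
    using f_closed[OF mcarr_quot_I[OF that]] by (auto simp: induced_def mcarr_quot)
  have "munit A \<in> I \<Longrightarrow> f (munit A) \<in> J"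
    using contraction[OF pcmonD(1)[OF pcmon_A]] subset_mrad[OF pcmon_A ideal_I] by blast
  then show "induced B J f (munit (quot A I)) = munit (quot B J)"
    using f_simps zero_J by (auto simp: quot_def induced_def)
  show "induced B J f (mzero (quot A I)) = mzero (quot B J)"
    using f_simps zero_J by (simp add: quot_def induced_def)
  fix a b assume "a \<in> mcarr (quot A I)" "b \<in> mcarr (quot A I)"
  then have a: "a \<in> mcarr A" and b: "b \<in> mcarr A" using mcarr_quot_I by blast+
  have f_ab: "f (mmul A a b) = mmul B (f a) (f b)" using hom_f a b unfolding mon_hom_def by blast
  have I_J: "x \<in> I \<Longrightarrow> f x \<in> J" for x
    using contraction[OF mideal_subset[OF ideal_I]] subset_mrad[OF pcmon_A ideal_I] by blast
  show "induced B J f (mmul (quot A I) a b) = mmul (quot B J) (induced B J f a) (induced B J f b)"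
  proof (cases "f a \<in> J \<or> f b \<in> J")
    case True
    then have "f (mmul A a b) \<in> J"
      using f_ab mideal_mmul_left[OF ideal_J] mideal_mmul_right[OF ideal_J pcmon_B] f_closed a b
      by auto
    moreover have "mmul B (induced B J f a) (induced B J f b) = mzero B"
      using True pcmonD(2,7)[OF pcmon_B] pcmon_mmul_zero_right[OF pcmon_B] f_closed a b
      by (auto simp: induced_def)
    ultimately show ?thesis using zero_J f_simps I_J by (simp add: quot_def induced_def)
  next
    case False
    have "mmul A a b \<in> I \<Longrightarrow> mmul B (f a) (f b) \<in> J" using I_J f_ab by metis
    then show ?thesis using False f_ab f_simps zero_J by (auto simp: quot_def induced_def)
  qed
qed

lemma induced_eq_iff:
  assumes "a \<in> mcarr (quot A I)" "b \<in> mcarr (quot A I)"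
  shows "induced B J f a = induced B J f b \<longleftrightarrow>
    (\<forall>\<^sub>F n in sequentially. mpow (quot A I) a n = mpow (quot A I) b n)"
proof -
  have a: "a \<in> mcarr A" and b: "b \<in> mcarr A" using assms mcarr_quot_I by blast+
  have f_nonzero: "f x \<noteq> mzero B" if "x \<in> mcarr A" "x \<notin> mrad A I" for x
    using contraction[OF that(1)] that(2) mideal_mzero[OF ideal_J] by auto
  have separated: "induced B J f x \<noteq> induced B J f y \<and>
      \<not> (\<forall>\<^sub>F n in sequentially. mpow (quot A I) x n = mpow (quot A I) y n)"
    if "x \<in> mcarr A" "y \<in> mcarr A" "x \<in> mrad A I" "y \<notin> mrad A I" for x y
  proof
    show "induced B J f x \<noteq> induced B J f y"
      using that f_nonzero[of y] by (simp add: induced_eq)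
    show "\<not> (\<forall>\<^sub>F n in sequentially. mpow (quot A I) x n = mpow (quot A I) y n)"
    proof
      assume "\<forall>\<^sub>F n in sequentially. mpow (quot A I) x n = mpow (quot A I) y n"
      with eventually_mpow_quot_zero_iff[OF that(1)] that(3)
      have "\<forall>\<^sub>F n in sequentially. mpow (quot A I) y n = mzero A"
        by (auto elim: eventually_elim2)
      then show False using eventually_mpow_quot_zero_iff[OF that(2)] that(4) by blast
    qed
  qed
  consider "a \<in> mrad A I" "b \<in> mrad A I" | "a \<in> mrad A I" "b \<notin> mrad A I"
    | "a \<notin> mrad A I" "b \<in> mrad A I" | "a \<notin> mrad A I" "b \<notin> mrad A I"
    by blast
  then show ?thesis
  proof cases
    case 1
    then show ?thesis
      using eventually_mpow_quot_zero_iff[OF a] eventually_mpow_quot_zero_iff[OF b]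
      by (auto simp: induced_eq[OF a] induced_eq[OF b] elim: eventually_elim2)
  next
    case 2
    then show ?thesis using separated[OF a b 2] by blast
  next
    case 3
    have "(\<forall>\<^sub>F n in sequentially. mpow (quot A I) a n = mpow (quot A I) b n) \<longleftrightarrow>
        (\<forall>\<^sub>F n in sequentially. mpow (quot A I) b n = mpow (quot A I) a n)"
      by (simp only: eq_commute)
    then show ?thesis using separated[OF b a 3(2,1)] by metis
  next
    case 4
    have "(\<forall>\<^sub>F n in sequentially. mpow (quot A I) a n = mpow (quot A I) b n) \<longleftrightarrow>
        (\<forall>\<^sub>F n in sequentially. mpow A a n = mpow A b n)"
      using eventually_mpow_quot_eq[OF a] eventually_mpow_quot_eq[OF b] 4
      by (intro eventually_subst) (auto elim: eventually_elim2)
    then show ?thesis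
      using 4 seminormalization a b
      unfolding induced_eq[OF a] induced_eq[OF b] is_seminormalization_def eventually_sequentially
      by simp
  qed
qed

lemma eventually_mpow_quot_in_induced_image:
  assumes "b \<in> mcarr (quot B J)"
  shows "\<forall>\<^sub>F n in sequentially. mpow (quot B J) b n \<in> induced B J f ` mcarr (quot A I)"
proof -
  have b: "b \<in> mcarr B" using assms pcmonD(2)[OF pcmon_B] unfolding mcarr_quot by blast
  note pow_b = mpow_quot_mrad[OF pcmon_B ideal_J radical_J b]
  show ?thesis
  proof (cases "b \<in> J")
    case True
    have "induced B J f (mzero A) = mzero B"
      using hom_f mideal_mzero[OF ideal_J] unfolding mon_hom_def induced_def by simp
    moreover have "mzero A \<in> mcarr (quot A I)" unfolding mcarr_quot by blast
    ultimately have "mzero B \<in> induced B J f ` mcarr (quot A I)" by (metis image_eqI)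
    then show ?thesis
      unfolding eventually_sequentially using True pow_b by (intro exI[of _ 1]) auto
  next
    case False
    obtain N where N: "\<forall>n\<ge>N. mpow B b n \<in> f ` mcarr A"
      using seminormalization b unfolding is_seminormalization_def by blast
    have "mpow (quot B J) b n \<in> induced B J f ` mcarr (quot A I)" if n: "n \<ge> max N 1" for n
    proof -
      obtain a where a: "a \<in> mcarr A" "mpow B b n = f a" using N n by force
      have "mpow B b n \<notin> J"
        using False mrad_mpow[OF pcmon_B b, of n J] radical_J n by auto
      then have "a \<notin> mrad A I" using contraction[OF a(1)] a(2) by simp
      then have "a \<in> mcarr (quot A I)"
        using a(1) subset_mrad[OF pcmon_A ideal_I] unfolding mcarr_quot by blast
      moreover have "induced B J f a = mpow (quot B J) b n"
        using \<open>a \<notin> mrad A I\<close> False pow_b n a by (simp add: induced_eq)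
      ultimately show ?thesis by (metis image_eqI)
    qed
    then show ?thesis unfolding eventually_sequentially by blast
  qed
qed

theorem is_seminormalization_quot:
  "is_seminormalization (quot A I) (quot B J) (induced B J f)"
  unfolding is_seminormalization_def
proof (intro conjI ballI)
  show "pcmon (quot A I)" using pcmon_quot[OF pcmon_A ideal_I] .
  show "mon_hom (quot A I) (quot B J) (induced B J f)" by (rule mon_hom_induced)
  show "seminormal (quot B J)"
    using seminormal_quot_mrad[OF _ ideal_J radical_J] seminormalization
    unfolding is_seminormalization_def by blast
  show "induced B J f a = induced B J f b \<longleftrightarrow>
      (\<exists>N. \<forall>n\<ge>N. mpow (quot A I) a n = mpow (quot A I) b n)"
    if "a \<in> mcarr (quot A I)" "b \<in> mcarr (quot A I)" for a b
    using induced_eq_iff[OF that] unfolding eventually_sequentially .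
  show "\<exists>N. \<forall>n\<ge>N. mpow (quot B J) b n \<in> induced B J f ` mcarr (quot A I)"
    if "b \<in> mcarr (quot B J)" for b
    using eventually_mpow_quot_in_induced_image[OF that] unfolding eventually_sequentially .
qed

end

theorem lemma1p14:
  fixes A :: "'a pcm" and Asn :: "'b pcm" and f :: "'a \<Rightarrow> 'b" and I :: "'a set"
  assumes "pc TYPE('c) A"
    and "is_seminormalization A Asn f"
    and "mideal A I"
  shows "is_seminormalization (quot A I)
           (quot Asn (mrad Asn (ext_ideal Asn f I)))
           (induced Asn (mrad Asn (ext_ideal Asn f I)) f)"
proof -
  have pB: "pcmon Asn" and hf: "mon_hom A Asn f"
    using assms(2) unfolding is_seminormalization_def seminormal_def by blast+
  have "f ` I \<subseteq> mcarr Asn" using hf mideal_subset[OF assms(3)] unfolding mon_hom_def by blast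
  then have "mideal Asn (ext_ideal Asn f I)" by (rule mideal_ext_ideal[OF pB])
  then interpret seminormalization_contraction A Asn f I "mrad Asn (ext_ideal Asn f I)"
    by unfold_locales
      (simp_all add: assms(2,3) mideal_mrad pB mrad_mrad seminormalization_mrad_ext_ideal)
  show ?thesis by (rule is_seminormalization_quot)
qed

end
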